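(* In the setting described in the context, let $U_0,\dots,U_d$ be one of the six decompositions below, with $U_{-1}=U_{d+1}=0$ and empty sums equal to $0$. Then for $0\le i\le d$: $[0D]$: $(K^*-q^{d-2i}I)U_i\subseteq U_{i-1}$ and $(K^{*-1}-q^{2i-d}I)U_i\subseteq U_0+\cdots+U_{i-1}$; $[0^*D^*]$: $(K^*-q^{d-2i}I)U_i\subseteq U_{i+1}+\cdots+U_d$ and $(K^{*-1}-q^{2i-d}I)U_i\subseteq U_{i+1}$; $[0^*D]$: $K^*U_i\subseteq U_{i-1}+\cdots+U_d$ and $K^{*-1}U_i\subseteq U_0+\cdots+U_{i+1}$; $[0^*0]$: $(K^*-q^{2i-d}I)U_i\subseteq U_{i+1}+\cdots+U_d$ and $(K^{*-1}-q^{d-2i}I)U_i\subseteq U_{i+1}$; $[D^*0]$: $(K^*-q^{2i-d}I)U_i=0$ and $(K^{*-1}-q^{d-2i}I)U_i=0$; $[D^*D]$: $(K^*-q^{2i-d}I)U_i\subseteq U_{i-1}$ and $(K^{*-1}-q^{d-2i}I)U_i\subseteq U_0+\cdots+U_{i-1}$.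
   Context: $\mathbb K$ is an algebraically closed field, $q\in\mathbb K$ nonzero and not a root of unity, $V$ a nonzero finite-dimensional $\mathbb K$-vector space. A tridiagonal pair on $V$ is an ordered pair $A,A^*$ of linear maps $V\to V$ such that: (i) each of $A,A^*$ is diagonalizable; (ii) there is an ordering $V_0,\dots,V_d$ of the eigenspaces of $A$ with $A^*V_i\subseteq V_{i-1}+V_i+V_{i+1}$ ($V_{-1}=V_{d+1}=0$); (iii) there is an ordering $V^*_0,\dots,V^*_\delta$ of the eigenspaces of $A^*$ with $AV^*_i\subseteq V^*_{i-1}+V^*_i+V^*_{i+1}$ ($V^*_{-1}=V^*_{\delta+1}=0$); (iv) no subspace $W\ne0,V$ satisfies $AW\subseteq W$, $A^*W\subseteq W$. It is known $d=\delta$; orderings as in (ii),(iii) are called standard. Setting: $A,A^*$ is a tridiagonal pair on $V$; $V_0,\dots,V_d$ (resp. $V^*_0,\dots,V^*_d$) is a standard ordering of the eigenspaces of $A$ (resp. $A^*$); the eigenvalue of $A$ on $V_i$ is $aq^{2i-d}$ and that of $A^*$ on $V^*_i$ is $a^*q^{d-2i}$ for some nonzero $a,a^*\in\mathbb K$. The six decompositions of $V$ (sequences of nonzero subspaces whose sum is direct and equals $V$) are, for $0\le i\le d$: $[0D]$: $U_i=V_i$; $[0^*D^*]$: $U_i=V^*_i$; $[0^*D]$: $U_i=(V^*_0+\cdots+V^*_i)\cap(V_i+\cdots+V_d)$; $[0^*0]$: $U_i=(V^*_0+\cdots+V^*_i)\cap(V_0+\cdots+V_{d-i})$; $[D^*0]$: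 $U_i=(V^*_{d-i}+\cdots+V^*_d)\cap(V_0+\cdots+V_{d-i})$; $[D^*D]$: $U_i=(V^*_{d-i}+\cdots+V^*_d)\cap(V_i+\cdots+V_d)$. $K^*:V\to V$ is the linear map acting as $q^{2i-d}I$ on the $i$th subspace of $[D^*0]$ for each $i$. *)

theory Defs
  imports "HOL-Computational_Algebra.Polynomial"
begin

text \<open>Vector spaces are given as a type 'v with a scalar multiplication
  s :: 'k \<Rightarrow> 'v \<Rightarrow> 'v satisfying the library locale vector_space.\<close>

definition alg_closed_field :: "'k::field itself \<Rightarrow> bool" where
  "alg_closed_field _ \<longleftrightarrow> (\<forall>p::'k poly. degree p > 0 \<longrightarrow> (\<exists>x. poly p x = 0))"

definition fin_dim :: "('k::field \<Rightarrow> 'v::ab_group_add \<Rightarrow> 'v) \<Rightarrow> bool" where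
  "fin_dim s \<longleftrightarrow> (\<exists>B. finite B \<and> module.span s B = UNIV)"

definition eigenspace :: "('k::field \<Rightarrow> 'v::ab_group_add \<Rightarrow> 'v) \<Rightarrow> ('v \<Rightarrow> 'v) \<Rightarrow> 'k \<Rightarrow> 'v set" where
  "eigenspace s A c = {v. A v = s c v}"

definition is_eigenvalue :: "('k::field \<Rightarrow> 'v::ab_group_add \<Rightarrow> 'v) \<Rightarrow> ('v \<Rightarrow> 'v) \<Rightarrow> 'k \<Rightarrow> bool" where
  "is_eigenvalue s A c \<longleftrightarrow> eigenspace s A c \<noteq> {0}"

definition diagonalizable :: "('k::field \<Rightarrow> 'v::ab_group_add \<Rightarrow> 'v) \<Rightarrow> ('v \<Rightarrow> 'v) \<Rightarrow> bool" where
  "diagonalizable s A \<longleftrightarrow> module.span s (\<Union>c. eigenspace s A c) = UNIV"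

definition ssum :: "('k::field \<Rightarrow> 'v::ab_group_add \<Rightarrow> 'v) \<Rightarrow> ('i \<Rightarrow> 'v set) \<Rightarrow> 'i set \<Rightarrow> 'v set" where
  "ssum s S I = module.span s (\<Union>i\<in>I. S i)"

definition standard_ordering ::
  "('k::field \<Rightarrow> 'v::ab_group_add \<Rightarrow> 'v) \<Rightarrow> ('v \<Rightarrow> 'v) \<Rightarrow> ('v \<Rightarrow> 'v) \<Rightarrow> (nat \<Rightarrow> 'v set) \<Rightarrow> nat \<Rightarrow> bool" where
  "standard_ordering s A B Vs d \<longleftrightarrow>
     bij_betw Vs {..d} {eigenspace s A c | c. is_eigenvalue s A c} \<and>
     (\<forall>i\<le>d. B ` Vs i \<subseteq> ssum s Vs ({i - 1, i, i + 1} \<inter> {..d}))"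

definition TD_pair :: "('k::field \<Rightarrow> 'v::ab_group_add \<Rightarrow> 'v) \<Rightarrow> ('v \<Rightarrow> 'v) \<Rightarrow> ('v \<Rightarrow> 'v) \<Rightarrow> bool" where
  "TD_pair s A B \<longleftrightarrow>
     Vector_Spaces.linear s s A \<and> Vector_Spaces.linear s s B \<and>
     diagonalizable s A \<and> diagonalizable s B \<and>
     (\<exists>Vs d. standard_ordering s A B Vs d) \<and>
     (\<exists>Vs d. standard_ordering s B A Vs d) \<and>
     (\<forall>W. module.subspace s W \<and> A ` W \<subseteq> W \<and> B ` W \<subseteq> W \<longrightarrow> W = {0} \<or> W = UNIV)"

definition ext_idx :: "(nat \<Rightarrow> 'v::zero set) \<Rightarrow> nat \<Rightarrow> int \<Rightarrow> 'v set" where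
  "ext_idx U d j = (if 0 \<le> j \<and> j \<le> int d then U (nat j) else {0})"

text \<open>The six decompositions (Vs = eigenspaces of A, Vss = eigenspaces of A*).\<close>
definition dec_0D :: "(nat \<Rightarrow> 'v set) \<Rightarrow> (nat \<Rightarrow> 'v set) \<Rightarrow> nat \<Rightarrow> nat \<Rightarrow> 'v set" where
  "dec_0D Vs Vss d i = Vs i"
definition dec_0sDs :: "(nat \<Rightarrow> 'v set) \<Rightarrow> (nat \<Rightarrow> 'v set) \<Rightarrow> nat \<Rightarrow> nat \<Rightarrow> 'v set" where
  "dec_0sDs Vs Vss d i = Vss i"
definition dec_0sD :: "('k::field \<Rightarrow> 'v::ab_group_add \<Rightarrow> 'v) \<Rightarrow> (nat \<Rightarrow> 'v set) \<Rightarrow> (nat \<Rightarrow> 'v set) \<Rightarrow> nat \<Rightarrow> nat \<Rightarrow> 'v set" where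
  "dec_0sD s Vs Vss d i = ssum s Vss {0..i} \<inter> ssum s Vs {i..d}"
definition dec_0s0 :: "('k::field \<Rightarrow> 'v::ab_group_add \<Rightarrow> 'v) \<Rightarrow> (nat \<Rightarrow> 'v set) \<Rightarrow> (nat \<Rightarrow> 'v set) \<Rightarrow> nat \<Rightarrow> nat \<Rightarrow> 'v set" where
  "dec_0s0 s Vs Vss d i = ssum s Vss {0..i} \<inter> ssum s Vs {0..d - i}"
definition dec_Ds0 :: "('k::field \<Rightarrow> 'v::ab_group_add \<Rightarrow> 'v) \<Rightarrow> (nat \<Rightarrow> 'v set) \<Rightarrow> (nat \<Rightarrow> 'v set) \<Rightarrow> nat \<Rightarrow> nat \<Rightarrow> 'v set" where
  "dec_Ds0 s Vs Vss d i = ssum s Vss {d - i..d} \<inter> ssum s Vs {0..d - i}"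
definition dec_DsD :: "('k::field \<Rightarrow> 'v::ab_group_add \<Rightarrow> 'v) \<Rightarrow> (nat \<Rightarrow> 'v set) \<Rightarrow> (nat \<Rightarrow> 'v set) \<Rightarrow> nat \<Rightarrow> nat \<Rightarrow> 'v set" where
  "dec_DsD s Vs Vss d i = ssum s Vss {d - i..d} \<inter> ssum s Vs {i..d}"

definition shift_img :: "('k::field \<Rightarrow> 'v::ab_group_add \<Rightarrow> 'v) \<Rightarrow> ('v \<Rightarrow> 'v) \<Rightarrow> 'k \<Rightarrow> 'v set \<Rightarrow> 'v set" where
  "shift_img s K c U = (\<lambda>v. K v - s c v) ` U"

end

theory Submission
  imports Defs
begin

(* The decomposition [D*0] is the split decomposition for the reversed orderings
   V_d, ..., V_0 and V*_d, ..., V*_0. On its i-th summand K* is the scalar q^(2i-d), A is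
   a q^(d-2i) plus a raising map and A* is a* q^(2i-d) plus a lowering map; this gives the
   q-Weyl relations K* A - q^2 A K* = (1 - q^2) a and K*^-1 A* - q^2 A* K*^-1 = (1 - q^2) a*.
   By them, K* - q^(d-2i) maps V_i into the eigenspace of A for a q^(2i-2-d), i.e. into V_(i-1),
   and K*^-1 - q^(2i-d) maps V*_i into V*_(i+1). The remaining inclusions are bookkeeping with
   flags: by the usual irreducibility argument the partial sums U_0 + ... + U_i and
   U_i + ... + U_d of a split decomposition are the flags it is built from, so every flag of
   V_0, ..., V_d or V*_0, ..., V*_d is a partial sum of [D*0], on which K* - q^(2i-d) and
   K*^-1 - q^(d-2i) act by dropping the i-th summand. *)

section \<open>Sums of subspaces and diagonal operators\<close>

sublocale vector_space \<subseteq> endo: vector_space_pair scale scale ..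

context vector_space
begin

lemma subspace_ssum [simp]: "subspace (ssum scale S I)"
  by (simp add: ssum_def)

lemma ssum_empty [simp]: "ssum scale S {} = {0}"
  by (simp add: ssum_def)

lemma ssum_base: "i \<in> I \<Longrightarrow> x \<in> S i \<Longrightarrow> x \<in> ssum scale S I"
  unfolding ssum_def by (rule span_base) auto

lemma ssum_mono: "I \<subseteq> J \<Longrightarrow> ssum scale S I \<subseteq> ssum scale S J"
  unfolding ssum_def by (rule span_mono) auto

lemma ssum_least: "(\<And>i. i \<in> I \<Longrightarrow> S i \<subseteq> T) \<Longrightarrow> subspace T \<Longrightarrow> ssum scale S I \<subseteq> T"
  unfolding ssum_def by (rule span_minimal) auto

lemma ssum_cong: "(\<And>i. i \<in> I \<Longrightarrow> S i = S' i) \<Longrightarrow> ssum scale S I = ssum scale S' I"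
  unfolding ssum_def by (metis image_cong)

lemma ssum_reindex: "ssum scale (\<lambda>j. S (f j)) I = ssum scale S (f ` I)"
  by (simp add: ssum_def image_image)

lemma ssum_Un: "ssum scale S (I \<union> J) = {x + y | x y. x \<in> ssum scale S I \<and> y \<in> ssum scale S J}"
  unfolding ssum_def by (simp add: image_Un span_Un)

lemma ssum_mono_neutral_right:
  assumes "I \<subseteq> J" and "\<And>j. j \<in> J - I \<Longrightarrow> S j = {0}"
  shows "ssum scale S J = ssum scale S I"
proof
  show "ssum scale S J \<subseteq> ssum scale S I"
  proof (rule ssum_least)
    show "S j \<subseteq> ssum scale S I" if "j \<in> J" for j
      using that assms(2)[of j] by (cases "j \<in> I") (auto intro: ssum_base subspace_0)
  qed simp
qed (rule ssum_mono[OF assms(1)])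

lemma linear_image_ssum_subset:
  assumes "Vector_Spaces.linear scale scale f" and "\<And>i x. i \<in> I \<Longrightarrow> x \<in> S i \<Longrightarrow> f x \<in> T"
    and "subspace T"
  shows "f ` ssum scale S I \<subseteq> T"
proof -
  have "f ` ssum scale S I = span (f ` (\<Union>i\<in>I. S i))"
    by (simp add: ssum_def endo.linear_span_image[OF assms(1)])
  also have "\<dots> \<subseteq> T"
    using assms by (intro span_minimal) auto
  finally show ?thesis .
qed

lemma linear_minus_scale:
  "Vector_Spaces.linear scale scale f \<Longrightarrow> Vector_Spaces.linear scale scale (\<lambda>v. f v - c *s v)"
  by (intro endo.linear_compose_sub linear_scale_self)

lemma subspace_eigenspace:
  "Vector_Spaces.linear scale scale A \<Longrightarrow> subspace (eigenspace scale A c)"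
  by (auto simp: subspace_def eigenspace_def endo.linear_0 endo.linear_add endo.linear_scale
      scale_right_distrib)

lemma eigenvector_in_ssum_eq_0:
  assumes lin: "Vector_Spaces.linear scale scale A" and "finite I"
    and eig: "\<And>j x. j \<in> I \<Longrightarrow> x \<in> S j \<Longrightarrow> A x = f j *s x" and "c \<notin> f ` I"
    and "v \<in> ssum scale S I" and "A v = c *s v"
  shows "v = 0"
  using \<open>finite I\<close> assms(3-)
proof (induction I arbitrary: v rule: finite_induct)
  case (insert k I)
  have "ssum scale S (insert k I) = ssum scale S ({k} \<union> I)" by simp
  then obtain x y where xy: "x \<in> ssum scale S {k}" "y \<in> ssum scale S I" "v = x + y"
    using insert.prems(3) ssum_Un by blast
  have "ssum scale S {k} \<subseteq> eigenspace scale A (f k)"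
    using insert.prems(1) by (intro ssum_least subspace_eigenspace[OF lin]) (auto simp: eigenspace_def)
  with xy have Ax: "A x = f k *s x" by (auto simp: eigenspace_def)
  have shift_I: "(\<lambda>v. A v - f k *s v) ` ssum scale S I \<subseteq> ssum scale S I"
  proof (rule linear_image_ssum_subset[OF linear_minus_scale[OF lin]])
    fix i x assume "i \<in> I" "x \<in> S i"
    then have "A x - f k *s x = (f i - f k) *s x" using insert.prems(1) by (simp add: algebra_simps)
    then show "A x - f k *s x \<in> ssum scale S I"
      using \<open>i \<in> I\<close> \<open>x \<in> S i\<close> by (simp add: subspace_scale ssum_base)
  qed simp
  have "c *s v = f k *s x + A y"
    using xy Ax insert.prems(4) by (simp add: endo.linear_add[OF lin])
  then have "(c - f k) *s v = A y - f k *s y"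
    using xy by (simp add: algebra_simps)
  with shift_I xy have w: "(c - f k) *s v \<in> ssum scale S I" by auto
  have "A ((c - f k) *s v) = c *s ((c - f k) *s v)"
    using insert.prems(4) by (simp add: endo.linear_scale[OF lin] mult.commute)
  then have "(c - f k) *s v = 0"
    using insert.IH[OF _ _ w] insert.prems(1,2) by auto
  moreover have "c \<noteq> f k" using insert.prems(2) by auto
  ultimately show ?case by simp
qed simp

lemma diagonal_minus_scale_image:
  assumes lin: "Vector_Spaces.linear scale scale K" and eig: "\<And>j v. v \<in> E j \<Longrightarrow> K v = \<kappa> j *s v"
  shows "(\<lambda>v. K v - \<kappa> m *s v) ` ssum scale E J \<subseteq> ssum scale E (J - {m})"
proof (rule linear_image_ssum_subset[OF linear_minus_scale[OF lin]])
  fix j x assume "j \<in> J" "x \<in> E j"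
  then have "K x - \<kappa> m *s x = (\<kappa> j - \<kappa> m) *s x" by (simp add: eig algebra_simps)
  then show "K x - \<kappa> m *s x \<in> ssum scale E (J - {m})"
    using \<open>j \<in> J\<close> \<open>x \<in> E j\<close> by (cases "j = m") (auto simp: subspace_0 subspace_scale ssum_base)
qed simp

lemma diagonal_bij:
  fixes E :: "nat \<Rightarrow> 'b set"
  assumes lin: "Vector_Spaces.linear scale scale K" and eig: "\<And>j v. v \<in> E j \<Longrightarrow> K v = \<kappa> j *s v"
    and sub: "\<And>j. subspace (E j)" and nz: "\<And>j. \<kappa> j \<noteq> 0"
    and span: "ssum scale E {..d} = UNIV"
  shows "bij K"
  unfolding bij_def
proof
  have "0 \<notin> \<kappa> ` {..d}" using nz by auto
  then have "v = 0" if "K v = 0" for v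
    by (intro eigenvector_in_ssum_eq_0[OF lin finite_atMost, where S = E and f = \<kappa> and c = 0])
      (use eig that span in auto)
  then show "inj K" by (simp add: endo.linear_inj_iff_eq_0[OF lin])
  have "E j \<subseteq> range K" for j
  proof
    fix v assume "v \<in> E j"
    then have "K (inverse (\<kappa> j) *s v) = v"
      using nz eig[OF subspace_scale[OF sub]] by simp
    then show "v \<in> range K" by (metis rangeI)
  qed
  then have "ssum scale E {..d} \<subseteq> range K"
    by (intro ssum_least endo.linear_subspace_image[OF lin]) simp_all
  then show "surj K" using span by auto
qed

lemma commutation_from_eigenspaces:
  assumes linL: "Vector_Spaces.linear scale scale L" and linM: "Vector_Spaces.linear scale scale M"
    and span: "ssum scale E I = UNIV"
    and L_eig: "\<And>j x. j \<in> I \<Longrightarrow> x \<in> E j \<Longrightarrow> L x = \<rho> j *s x"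
    and nz: "\<And>j. j \<in> I \<Longrightarrow> \<rho> j \<noteq> 0"
    and M_step: "\<And>j x. j \<in> I \<Longrightarrow> x \<in> E j \<Longrightarrow>
      L (M x - (c / \<rho> j) *s x) = (p * \<rho> j) *s (M x - (c / \<rho> j) *s x)"
  shows "L (M v) - p *s M (L v) = ((1 - p) * c) *s v"
proof -
  define h where "h v = L (M v) - p *s M (L v) - ((1 - p) * c) *s v" for v
  have linh: "Vector_Spaces.linear scale scale h"
    unfolding h_def
    by (intro endo.linear_compose_sub linear_scale_self endo.linear_compose_scale_right
        Vector_Spaces.linear_compose[OF linM linL, unfolded o_def]
        Vector_Spaces.linear_compose[OF linL linM, unfolded o_def])
  have "h ` ssum scale E I \<subseteq> {0}"
  proof (rule linear_image_ssum_subset[OF linh])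
    fix j x assume j: "j \<in> I" and x: "x \<in> E j"
    define r where "r = M x - (c / \<rho> j) *s x"
    have Mx: "M x = (c / \<rho> j) *s x + r" by (simp add: r_def)
    have Lr: "L r = (p * \<rho> j) *s r" using M_step[OF j x] by (simp add: r_def)
    have "L (M x) = c *s x + (p * \<rho> j) *s r"
      using Lr L_eig[OF j x] nz[OF j] by (simp add: Mx endo.linear_add[OF linL] endo.linear_scale[OF linL])
    moreover have "M (L x) = c *s x + \<rho> j *s r"
      using L_eig[OF j x] nz[OF j]
      by (simp add: Mx endo.linear_scale[OF linM] scale_right_distrib)
    ultimately show "h x \<in> {0}"
      by (simp add: h_def algebra_simps)
  qed (simp add: subspace_0)
  then have "h v = 0" using span by blast
  then show ?thesis by (simp add: h_def)
qed

lemma commutation_eigenvector_shift: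
  assumes linL: "Vector_Spaces.linear scale scale L" and linM: "Vector_Spaces.linear scale scale M"
    and "p \<noteq> 0" and comm: "L (M v) - p *s M (L v) = ((1 - p) * c) *s v"
    and "M v = \<mu> *s v" and "\<mu> * \<rho> = c"
  shows "M (L v - \<rho> *s v) = (\<mu> / p) *s (L v - \<rho> *s v)"
proof -
  have "p *s M (L v) = \<mu> *s L v - ((1 - p) * c) *s v"
    using comm \<open>M v = \<mu> *s v\<close> by (simp add: endo.linear_scale[OF linL] algebra_simps)
  then have "p *s M (L v - \<rho> *s v) = p *s ((\<mu> / p) *s (L v - \<rho> *s v))"
    using assms(3,5,6) by (simp add: endo.linear_diff[OF linM] endo.linear_scale[OF linM] algebra_simps)
  then show ?thesis using \<open>p \<noteq> 0\<close> by (metis scale_cancel_left)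
qed

end

section \<open>Padded sequences and orderings of eigenspaces\<close>

definition pad :: "nat \<Rightarrow> (nat \<Rightarrow> 'v::zero set) \<Rightarrow> nat \<Rightarrow> 'v set" where
  "pad d S j = (if j \<le> d then S j else {0})"

lemma pad_le [simp]: "j \<le> d \<Longrightarrow> pad d S j = S j"
  and pad_gr [simp]: "d < j \<Longrightarrow> pad d S j = {0}"
  by (simp_all add: pad_def)

lemma reverse_image_atMost:
  "(\<lambda>j. d - j) ` (J \<inter> {..d}) = {m. m \<le> d \<and> d - m \<in> J}" for d :: nat
proof (intro set_eqI iffI)
  fix m assume "m \<in> {m. m \<le> d \<and> d - m \<in> J}"
  then show "m \<in> (\<lambda>j. d - j) ` (J \<inter> {..d})" by (intro image_eqI[of _ _ "d - m"]) auto
qed auto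

lemma ext_idx_eq:
  assumes "\<And>n. n \<le> d \<Longrightarrow> U n = S n" and "\<And>n. d < n \<Longrightarrow> S n = {0}"
  shows "ext_idx U d j = (if 0 \<le> j then S (nat j) else {0})"
  using assms by (auto simp: ext_idx_def)

lemma shift_img_mono: "U \<subseteq> U' \<Longrightarrow> shift_img s K c U \<subseteq> shift_img s K c U'"
  by (simp add: shift_img_def image_mono)

context vector_space
begin

lemma ssum_pad: "ssum scale (pad d S) J = ssum scale S (J \<inter> {..d})"
proof -
  have "ssum scale (pad d S) J = ssum scale (pad d S) (J \<inter> {..d})"
    by (rule ssum_mono_neutral_right) auto
  also have "\<dots> = ssum scale S (J \<inter> {..d})"
    by (rule ssum_cong) simp
  finally show ?thesis .
qed

lemma ssum_pad_reverse:
  "ssum scale (pad d (\<lambda>j. S (d - j))) J = ssum scale S {m. m \<le> d \<and> d - m \<in> J}"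
  by (simp add: ssum_pad ssum_reindex reverse_image_atMost)

lemma ssum_ext_idx:
  assumes "\<And>n. n \<le> d \<Longrightarrow> U n = S n" and "\<And>n. d < n \<Longrightarrow> S n = {0}"
  shows "ssum scale (ext_idx U d) J = ssum scale S {n. int n \<in> J}"
proof -
  have nat_image: "nat ` (J \<inter> {0..}) = {n. int n \<in> J}"
  proof (intro set_eqI iffI)
    fix n assume "n \<in> {n. int n \<in> J}"
    then show "n \<in> nat ` (J \<inter> {0..})" by (intro image_eqI[of _ _ "int n"]) auto
  qed auto
  have "ssum scale (ext_idx U d) J = ssum scale (ext_idx U d) (J \<inter> {0..})"
    by (rule ssum_mono_neutral_right) (auto simp: ext_idx_def)
  also have "\<dots> = ssum scale (\<lambda>j. S (nat j)) (J \<inter> {0..})"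
    by (rule ssum_cong) (simp add: ext_idx_eq[OF assms])
  finally show ?thesis by (simp add: ssum_reindex nat_image)
qed

lemma ext_idx_simps:
  assumes "\<And>n. n \<le> d \<Longrightarrow> U n = S n" and "\<And>n. d < n \<Longrightarrow> S n = {0}"
  shows "ext_idx U d (int i) = S i"
    and "ext_idx U d (int i - 1) = (if i = 0 then {0} else S (i - 1))"
    and "ext_idx U d (int i + 1) = S (Suc i)"
    and "ssum scale (ext_idx U d) {0..int i - 1} = ssum scale S {..<i}"
    and "ssum scale (ext_idx U d) {int i + 1..int d} = ssum scale S {Suc i..d}"
    and "ssum scale (ext_idx U d) {int i - 1..int d} = ssum scale S {i - 1..d}"
    and "ssum scale (ext_idx U d) {0..int i + 1} = ssum scale S {..Suc i}"
proof -
  show "ext_idx U d (int i) = S i" "ext_idx U d (int i - 1) = (if i = 0 then {0} else S (i - 1))"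
    "ext_idx U d (int i + 1) = S (Suc i)"
    by (auto simp: ext_idx_eq[OF assms] nat_diff_distrib nat_add_distrib)
  have "{n. int n \<in> {0..int i - 1}} = {..<i}" "{n. int n \<in> {int i + 1..int d}} = {Suc i..d}"
    "{n. int n \<in> {int i - 1..int d}} = {i - 1..d}" "{n. int n \<in> {0..int i + 1}} = {..Suc i}"
    by auto
  then show "ssum scale (ext_idx U d) {0..int i - 1} = ssum scale S {..<i}"
    "ssum scale (ext_idx U d) {int i + 1..int d} = ssum scale S {Suc i..d}"
    "ssum scale (ext_idx U d) {int i - 1..int d} = ssum scale S {i - 1..d}"
    "ssum scale (ext_idx U d) {0..int i + 1} = ssum scale S {..Suc i}"
    by (simp_all add: ssum_ext_idx[OF assms])
qed

end

definition eigen_ordering ::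
  "('k::field \<Rightarrow> 'v::ab_group_add \<Rightarrow> 'v) \<Rightarrow> ('v \<Rightarrow> 'v) \<Rightarrow> ('v \<Rightarrow> 'v) \<Rightarrow>
    (nat \<Rightarrow> 'v set) \<Rightarrow> (nat \<Rightarrow> 'k) \<Rightarrow> nat \<Rightarrow> bool"
  where
  "eigen_ordering s A B S \<theta> d \<longleftrightarrow> inj_on \<theta> {..d} \<and> ssum s S {..d} = UNIV \<and>
     (\<forall>j\<le>d. S j = eigenspace s A (\<theta> j) \<and> S j \<noteq> {0} \<and>
        B ` S j \<subseteq> ssum s S ({j - 1, j, j + 1} \<inter> {..d}))"

lemma eigen_orderingI:
  assumes "inj_on \<theta> {..d}" and "ssum s S {..d} = UNIV"
    and "\<And>j. j \<le> d \<Longrightarrow> S j = eigenspace s A (\<theta> j)" and "\<And>j. j \<le> d \<Longrightarrow> S j \<noteq> {0}"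
    and "\<And>j. j \<le> d \<Longrightarrow> B ` S j \<subseteq> ssum s S ({j - 1, j, j + 1} \<inter> {..d})"
  shows "eigen_ordering s A B S \<theta> d"
  using assms by (simp add: eigen_ordering_def)

lemma eigen_orderingD:
  assumes "eigen_ordering s A B S \<theta> d"
  shows "inj_on \<theta> {..d}" and "ssum s S {..d} = UNIV"
    and "j \<le> d \<Longrightarrow> S j = eigenspace s A (\<theta> j)" and "j \<le> d \<Longrightarrow> S j \<noteq> {0}"
    and "j \<le> d \<Longrightarrow> B ` S j \<subseteq> ssum s S ({j - 1, j, j + 1} \<inter> {..d})"
  using assms unfolding eigen_ordering_def by blast+

context vector_space
begin

lemma standard_ordering_imp_eigen_ordering:
  assumes so: "standard_ordering scale A B S d" and diag: "diagonalizable scale A"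
    and eig: "\<forall>j\<le>d. S j = eigenspace scale A (\<theta> j)"
  shows "eigen_ordering scale A B S \<theta> d"
proof (rule eigen_orderingI)
  have bij: "bij_betw S {..d} {eigenspace scale A c | c. is_eigenvalue scale A c}"
    using so by (simp add: standard_ordering_def)
  then show "inj_on \<theta> {..d}"
    using eig by (auto simp: inj_on_def bij_betw_def)
  have "(\<Union>c. eigenspace scale A c) \<subseteq> ssum scale S {..d}"
  proof
    fix x assume "x \<in> (\<Union>c. eigenspace scale A c)"
    then obtain c where c: "x \<in> eigenspace scale A c" by auto
    show "x \<in> ssum scale S {..d}"
    proof (cases "is_eigenvalue scale A c")
      case True
      then have "eigenspace scale A c \<in> S ` {..d}"
        using bij by (auto simp: bij_betw_def)
      then obtain j where "j \<le> d" "S j = eigenspace scale A c" by auto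
      then show ?thesis using c by (intro ssum_base[of j]) auto
    qed (use c in \<open>simp add: is_eigenvalue_def subspace_0\<close>)
  qed
  then have "span (\<Union>c. eigenspace scale A c) \<subseteq> ssum scale S {..d}"
    by (intro span_minimal) simp_all
  then show "ssum scale S {..d} = UNIV"
    using diag by (auto simp: diagonalizable_def)
  show "S j \<noteq> {0}" if "j \<le> d" for j
  proof -
    have "S j \<in> {eigenspace scale A c | c. is_eigenvalue scale A c}"
      using bij that by (auto simp: bij_betw_def)
    then show ?thesis by (auto simp: is_eigenvalue_def)
  qed
qed (use so eig in \<open>simp_all add: standard_ordering_def\<close>)

lemma eigen_ordering_pad:
  assumes "eigen_ordering scale A B S \<theta> d"
  shows "eigen_ordering scale A B (pad d S) \<theta> d"
proof (rule eigen_orderingI)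
  have ssum_eq: "ssum scale (pad d S) (I \<inter> {..d}) = ssum scale S (I \<inter> {..d})" for I
    by (simp add: ssum_pad Int_absorb2)
  show "ssum scale (pad d S) {..d} = UNIV"
    using ssum_eq[of "{..d}"] eigen_orderingD(2)[OF assms] by simp
  show "B ` pad d S j \<subseteq> ssum scale (pad d S) ({j - 1, j, j + 1} \<inter> {..d})" if "j \<le> d" for j
    using eigen_orderingD(5)[OF assms that] that by (simp only: ssum_eq pad_le)
qed (use eigen_orderingD[OF assms] in simp_all)

lemma eigen_ordering_reverse:
  assumes "eigen_ordering scale A B S \<theta> d"
  shows "eigen_ordering scale A B (\<lambda>j. S (d - j)) (\<lambda>j. \<theta> (d - j)) d"
proof (rule eigen_orderingI)
  note ord = eigen_orderingD[OF assms]
  have ssum_rev: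
    "ssum scale (\<lambda>j. S (d - j)) (J \<inter> {..d}) = ssum scale S {m. m \<le> d \<and> d - m \<in> J}" for J
    by (simp add: ssum_reindex reverse_image_atMost)
  show "inj_on (\<lambda>j. \<theta> (d - j)) {..d}"
  proof (rule inj_onI)
    fix i j assume "i \<in> {..d}" "j \<in> {..d}" "\<theta> (d - i) = \<theta> (d - j)"
    then have "d - i = d - j" using inj_onD[OF ord(1)] by simp
    then show "i = j" using \<open>i \<in> {..d}\<close> \<open>j \<in> {..d}\<close> by simp
  qed
  have "{m. m \<le> d \<and> d - m \<in> UNIV} = {..d}" by auto
  then show "ssum scale (\<lambda>j. S (d - j)) {..d} = UNIV"
    using ssum_rev[of UNIV] ord(2) by simp
  show "B ` S (d - j) \<subseteq> ssum scale (\<lambda>j. S (d - j)) ({j - 1, j, j + 1} \<inter> {..d})"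
    if "j \<le> d" for j
  proof -
    have "B ` S (d - j) \<subseteq> ssum scale S ({d - j - 1, d - j, d - j + 1} \<inter> {..d})"
      using ord(5)[of "d - j"] by simp
    also have "\<dots> \<subseteq> ssum scale S {m. m \<le> d \<and> d - m \<in> {j - 1, j, j + 1}}"
      using that by (intro ssum_mono) auto
    finally show ?thesis by (simp only: ssum_rev)
  qed
qed (use eigen_orderingD[OF assms] in simp_all)

lemma eigen_ordering_image_subset:
  assumes ord: "eigen_ordering scale A B S \<theta> d" and gr: "\<And>j. d < j \<Longrightarrow> S j = {0}"
    and lin: "Vector_Spaces.linear scale scale B"
  shows "B ` S j \<subseteq> ssum scale S {j - 1..j + 1}"
proof (cases "j \<le> d")
  case True
  have "B ` S j \<subseteq> ssum scale S ({j - 1, j, j + 1} \<inter> {..d})"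
    by (rule eigen_orderingD(5)[OF ord True])
  also have "\<dots> \<subseteq> ssum scale S {j - 1..j + 1}"
    by (rule ssum_mono) auto
  finally show ?thesis .
qed (simp add: gr endo.linear_0[OF lin] subspace_0)

lemma eigen_ordering_eigenvector_eq_0:
  assumes ord: "eigen_ordering scale A B S \<theta> d" and lin: "Vector_Spaces.linear scale scale A"
    and "A v = c *s v" and "c \<notin> \<theta> ` {..d}"
  shows "v = 0"
proof (rule eigenvector_in_ssum_eq_0[OF lin finite_atMost, where S = S and f = \<theta> and c = c])
  show "A x = \<theta> j *s x" if "j \<in> {..d}" "x \<in> S j" for j x
    using that eigen_orderingD(3)[OF ord] by (auto simp: eigenspace_def)
qed (use assms eigen_orderingD(2)[OF ord] in auto)

end

section \<open>The split decomposition\<close>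

locale tridiagonal_system =
  vector_space s for s :: "'k::field \<Rightarrow> 'v::ab_group_add \<Rightarrow> 'v" (infixr \<open>*s\<close> 75) +
  fixes A B :: "'v \<Rightarrow> 'v" and X Y :: "nat \<Rightarrow> 'v set" and d :: nat and \<theta> \<theta>' :: "nat \<Rightarrow> 'k"
  assumes linear_A: "Vector_Spaces.linear s s A" and linear_B: "Vector_Spaces.linear s s B"
    and X_ordering: "eigen_ordering s A B X \<theta> d" and Y_ordering: "eigen_ordering s B A Y \<theta>' d"
    and X_gr: "\<And>j. d < j \<Longrightarrow> X j = {0}" and Y_gr: "\<And>j. d < j \<Longrightarrow> Y j = {0}"
    and irreducible: "\<And>W. subspace W \<Longrightarrow> A ` W \<subseteq> W \<Longrightarrow> B ` W \<subseteq> W \<Longrightarrow> W = {0} \<or> W = UNIV"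
begin

definition Ysum :: "nat \<Rightarrow> 'v set" where "Ysum i = ssum s Y {..<i}"
definition Xsum :: "nat \<Rightarrow> 'v set" where "Xsum i = ssum s X {i..}"

definition U :: "nat \<Rightarrow> 'v set" where "U i = Ysum (Suc i) \<inter> Xsum i"

lemma subspace_Ysum [simp]: "subspace (Ysum i)"
  and subspace_Xsum [simp]: "subspace (Xsum i)"
  and subspace_U [simp]: "subspace (U i)"
  by (simp_all add: Ysum_def Xsum_def U_def subspace_inter)

lemma Ysum_mono: "i \<le> j \<Longrightarrow> Ysum i \<subseteq> Ysum j"
  unfolding Ysum_def by (rule ssum_mono) auto

lemma Xsum_antimono: "i \<le> j \<Longrightarrow> Xsum j \<subseteq> Xsum i"
  unfolding Xsum_def by (rule ssum_mono) auto

lemma Ysum_0 [simp]: "Ysum 0 = {0}"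
  by (simp add: Ysum_def)

lemma Xsum_0 [simp]: "Xsum 0 = UNIV"
  using ssum_mono[of "{..d}" "{0..}" X] eigen_orderingD(2)[OF X_ordering] by (auto simp: Xsum_def)

lemma X_eigen: "x \<in> X j \<Longrightarrow> A x = \<theta> j *s x"
  using eigen_orderingD(3)[OF X_ordering] X_gr endo.linear_0[OF linear_A]
  by (cases "j \<le> d") (auto simp: eigenspace_def)

lemma Y_eigen: "y \<in> Y j \<Longrightarrow> B y = \<theta>' j *s y"
  using eigen_orderingD(3)[OF Y_ordering] Y_gr endo.linear_0[OF linear_B]
  by (cases "j \<le> d") (auto simp: eigenspace_def)

lemma A_Xsum: "(\<lambda>v. A v - \<theta> i *s v) ` Xsum i \<subseteq> Xsum (Suc i)"
proof -
  have "{i..} - {i} = {Suc i..}" by auto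
  then show ?thesis
    using diagonal_minus_scale_image[OF linear_A X_eigen, where m = i and J = "{i..}"] by (simp add: Xsum_def)
qed

lemma B_Ysum: "(\<lambda>v. B v - \<theta>' i *s v) ` Ysum (Suc i) \<subseteq> Ysum i"
proof -
  have "{..<Suc i} - {i} = {..<i}" by auto
  then show ?thesis
    using diagonal_minus_scale_image[OF linear_B Y_eigen, where m = i and J = "{..<Suc i}"] by (simp add: Ysum_def)
qed

lemma B_Xsum: "B ` Xsum (Suc i) \<subseteq> Xsum i"
  unfolding Xsum_def
proof (rule linear_image_ssum_subset[OF linear_B])
  fix j x assume "j \<in> {Suc i..}" "x \<in> X j"
  then have "B x \<in> ssum s X {j - 1..j + 1}"
    using eigen_ordering_image_subset[OF X_ordering X_gr linear_B] by blast
  also have "\<dots> \<subseteq> ssum s X {i..}"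
    using \<open>j \<in> {Suc i..}\<close> by (intro ssum_mono) auto
  finally show "B x \<in> ssum s X {i..}" .
qed simp

lemma A_Ysum: "A ` Ysum i \<subseteq> Ysum (Suc i)"
  unfolding Ysum_def
proof (rule linear_image_ssum_subset[OF linear_A])
  fix j y assume "j \<in> {..<i}" "y \<in> Y j"
  then have "A y \<in> ssum s Y {j - 1..j + 1}"
    using eigen_ordering_image_subset[OF Y_ordering Y_gr linear_A] by blast
  also have "\<dots> \<subseteq> ssum s Y {..<Suc i}"
    using \<open>j \<in> {..<i}\<close> by (intro ssum_mono) auto
  finally show "A y \<in> ssum s Y {..<Suc i}" .
qed simp

lemma raise:
  assumes "v \<in> Ysum i \<inter> Xsum j"
  shows "A v - \<theta> j *s v \<in> Ysum (Suc i) \<inter> Xsum (Suc j)"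
proof
  have "A v \<in> Ysum (Suc i)" and "v \<in> Ysum (Suc i)"
    using assms A_Ysum Ysum_mono[of i "Suc i"] by auto
  then show "A v - \<theta> j *s v \<in> Ysum (Suc i)" by (simp add: subspace_diff subspace_scale)
  show "A v - \<theta> j *s v \<in> Xsum (Suc j)" using assms A_Xsum by blast
qed

lemma lower:
  assumes "v \<in> Ysum (Suc i) \<inter> Xsum (Suc j)"
  shows "B v - \<theta>' i *s v \<in> Ysum i \<inter> Xsum j"
proof
  show "B v - \<theta>' i *s v \<in> Ysum i" using assms B_Ysum by blast
  have "B v \<in> Xsum j" and "v \<in> Xsum j"
    using assms B_Xsum Xsum_antimono[of j "Suc j"] by auto
  then show "B v - \<theta>' i *s v \<in> Xsum j" by (simp add: subspace_diff subspace_scale)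
qed

lemma lower_0: "v \<in> Ysum 1 \<Longrightarrow> B v - \<theta>' 0 *s v = 0"
  using B_Ysum[of 0] by auto

lemma raising_lowering_trivial:
  assumes raise: "\<And>i u. u \<in> F i \<Longrightarrow> A u - \<alpha> i *s u \<in> F (Suc i)"
    and lower_0: "\<And>u. u \<in> F 0 \<Longrightarrow> B u - \<beta> 0 *s u = 0"
    and lower: "\<And>i u. u \<in> F (Suc i) \<Longrightarrow> B u - \<beta> (Suc i) *s u \<in> F i"
  shows "ssum s F UNIV = {0} \<or> ssum s F UNIV = UNIV"
proof (rule irreducible)
  have mem: "u \<in> F i \<Longrightarrow> u \<in> ssum s F UNIV" for u i by (rule ssum_base) simp_all
  show "A ` ssum s F UNIV \<subseteq> ssum s F UNIV"
  proof (rule linear_image_ssum_subset[OF linear_A])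
    fix i u assume "u \<in> F i"
    have "A u = \<alpha> i *s u + (A u - \<alpha> i *s u)" by simp
    then show "A u \<in> ssum s F UNIV"
      using \<open>u \<in> F i\<close> raise mem by (metis subspace_add subspace_scale subspace_ssum)
  qed simp
  show "B ` ssum s F UNIV \<subseteq> ssum s F UNIV"
  proof (rule linear_image_ssum_subset[OF linear_B])
    fix i u assume u: "u \<in> F i"
    have "B u - \<beta> i *s u \<in> ssum s F UNIV"
    proof (cases i)
      case 0
      then show ?thesis using u lower_0 by (simp add: subspace_0)
    qed (use u lower mem in blast)
    moreover have "B u = \<beta> i *s u + (B u - \<beta> i *s u)" by simp
    ultimately show "B u \<in> ssum s F UNIV"
      using u mem by (metis subspace_add subspace_scale subspace_ssum)
  qed simp
qed simp

lemma Xsum_1_neq_UNIV: "Xsum 1 \<noteq> UNIV"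
proof
  assume all: "Xsum 1 = UNIV"
  obtain x where x: "x \<in> X 0" "x \<noteq> 0"
    using eigen_orderingD(4)[OF X_ordering, of 0] subspace_0[OF subspace_eigenspace[OF linear_A]]
      eigen_orderingD(3)[OF X_ordering, of 0] by blast
  have "ssum s X {1..} = ssum s X {1..d}"
    by (rule ssum_mono_neutral_right) (auto simp: X_gr)
  then have "x \<in> ssum s X {1..d}"
    using all by (simp add: Xsum_def)
  moreover have "\<theta> 0 \<notin> \<theta> ` {1..d}"
  proof
    assume "\<theta> 0 \<in> \<theta> ` {1..d}"
    then obtain j where "j \<in> {1..d}" "\<theta> 0 = \<theta> j" by auto
    then show False using inj_onD[OF eigen_orderingD(1)[OF X_ordering], of 0 j] by auto
  qed
  ultimately show False
    using eigenvector_in_ssum_eq_0[OF linear_A finite_atLeastAtMost, where S = X and f = \<theta>] X_eigen x by blast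
qed

lemma Ysum_Int_Xsum: "Ysum i \<inter> Xsum i = {0}"
proof (cases i)
  case (Suc m)
  define F where "F j = Ysum (Suc j) \<inter> Xsum (Suc j)" for j
  have "ssum s F UNIV = {0} \<or> ssum s F UNIV = UNIV"
    by (rule raising_lowering_trivial[where \<alpha> = "\<lambda>j. \<theta> (Suc j)" and \<beta> = \<theta>'])
      (use raise lower lower_0 in \<open>auto simp: F_def\<close>)
  moreover have "ssum s F UNIV \<subseteq> Xsum 1"
  proof (rule ssum_least)
    show "F j \<subseteq> Xsum 1" for j using Xsum_antimono[of 1 "Suc j"] by (auto simp: F_def)
  qed simp
  ultimately have "ssum s F UNIV = {0}"
    using Xsum_1_neq_UNIV by auto
  then show ?thesis
    using ssum_base[of m UNIV _ F] subspace_0[of "F m"] Suc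
    by (auto simp: F_def subspace_inter)
qed (simp add: subspace_0)

lemma U_raise: "u \<in> U i \<Longrightarrow> A u - \<theta> i *s u \<in> U (Suc i)"
  using raise[of u "Suc i" i] by (simp add: U_def)

lemma U_lower: "u \<in> U (Suc i) \<Longrightarrow> B u - \<theta>' (Suc i) *s u \<in> U i"
  using lower[of u "Suc i" i] by (simp add: U_def)

lemma U_lower_0: "u \<in> U 0 \<Longrightarrow> B u - \<theta>' 0 *s u = 0"
  using lower_0 by (simp add: U_def)

lemma ssum_U_UNIV: "ssum s U UNIV = UNIV"
proof -
  obtain y where y: "y \<in> Y 0" "y \<noteq> 0"
    using eigen_orderingD(4)[OF Y_ordering, of 0] subspace_0[OF subspace_eigenspace[OF linear_B]]
      eigen_orderingD(3)[OF Y_ordering, of 0] by blast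
  then have "y \<in> U 0"
    by (simp add: U_def Ysum_def ssum_base)
  then have "ssum s U UNIV \<noteq> {0}"
    using y ssum_base[of 0 UNIV y U] by auto
  then show ?thesis
    using raising_lowering_trivial[of U \<theta> \<theta>'] U_raise U_lower U_lower_0 by blast
qed

lemma ssum_U_lessThan_atLeast:
  shows "ssum s U {..<i} \<subseteq> Ysum i" and "ssum s U {i..} \<subseteq> Xsum i"
    and "\<exists>x y. x \<in> ssum s U {..<i} \<and> y \<in> ssum s U {i..} \<and> v = x + y"
proof -
  show "ssum s U {..<i} \<subseteq> Ysum i"
  proof (rule ssum_least)
    show "U j \<subseteq> Ysum i" if "j \<in> {..<i}" for j
      using that Ysum_mono[of "Suc j" i] by (auto simp: U_def)
  qed simp
  show "ssum s U {i..} \<subseteq> Xsum i"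
  proof (rule ssum_least)
    show "U j \<subseteq> Xsum i" if "j \<in> {i..}" for j
      using that Xsum_antimono[of i j] by (auto simp: U_def)
  qed simp
  have "{..<i} \<union> {i..} = UNIV" by auto
  then have "v \<in> ssum s U ({..<i} \<union> {i..})" using ssum_U_UNIV by simp
  then show "\<exists>x y. x \<in> ssum s U {..<i} \<and> y \<in> ssum s U {i..} \<and> v = x + y"
    unfolding ssum_Un by blast
qed

lemma ssum_U_lessThan: "ssum s U {..<i} = ssum s Y {..<i}"
proof
  show "ssum s Y {..<i} \<subseteq> ssum s U {..<i}"
  proof
    fix v assume v: "v \<in> ssum s Y {..<i}"
    obtain x y where xy: "x \<in> ssum s U {..<i}" "y \<in> ssum s U {i..}" "v = x + y"
      using ssum_U_lessThan_atLeast(3) by blast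
    have "x \<in> Ysum i" "y \<in> Xsum i"
      using xy(1,2) ssum_U_lessThan_atLeast(1,2) by blast+
    moreover have "y = v - x" using xy(3) by simp
    ultimately have "y \<in> Ysum i \<inter> Xsum i"
      using v by (simp add: Ysum_def subspace_diff)
    then show "v \<in> ssum s U {..<i}" using xy Ysum_Int_Xsum by simp
  qed
qed (use ssum_U_lessThan_atLeast(1) in \<open>simp add: Ysum_def\<close>)

lemma ssum_U_atMost: "ssum s U {..i} = ssum s Y {..i}"
  using ssum_U_lessThan[of "Suc i"] by (simp add: lessThan_Suc_atMost)

lemma ssum_U_atLeast: "ssum s U {i..} = ssum s X {i..}"
proof
  show "ssum s X {i..} \<subseteq> ssum s U {i..}"
  proof
    fix v assume v: "v \<in> ssum s X {i..}"
    obtain x y where xy: "x \<in> ssum s U {..<i}" "y \<in> ssum s U {i..}" "v = x + y"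
      using ssum_U_lessThan_atLeast(3) by blast
    have "x \<in> Ysum i" "y \<in> Xsum i"
      using xy(1,2) ssum_U_lessThan_atLeast(1,2) by blast+
    moreover have "x = v - y" using xy(3) by simp
    ultimately have "x \<in> Ysum i \<inter> Xsum i"
      using v by (simp add: Xsum_def subspace_diff)
    then show "v \<in> ssum s U {i..}" using xy Ysum_Int_Xsum by simp
  qed
qed (use ssum_U_lessThan_atLeast(2) in \<open>simp add: Xsum_def\<close>)

lemma U_eq: "U i = ssum s Y {..i} \<inter> ssum s X {i..}"
  by (simp add: U_def Ysum_def Xsum_def lessThan_Suc_atMost)

lemma U_gr: "d < i \<Longrightarrow> U i = {0}"
proof -
  assume "d < i"
  then have "Xsum i = ssum s X {}"
    unfolding Xsum_def using X_gr by (intro ssum_mono_neutral_right) auto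
  then show ?thesis by (auto simp: U_def subspace_0)
qed

lemma ssum_U_atLeastAtMost: "ssum s U {i..d} = ssum s U {i..}"
  by (rule ssum_mono_neutral_right[symmetric]) (auto simp: U_gr)

end

section \<open>The map \<open>K\<^sup>*\<close> of a pair of \<open>q\<close>-geometric type\<close>

lemma power_int_inj:
  fixes q :: "'k::field"
  assumes "q \<noteq> 0" and no_root: "\<forall>n>0. q ^ n \<noteq> 1" and eq: "q powi m = q powi n"
  shows "m = n"
proof -
  have pos: "q powi k \<noteq> 1" if "0 < k" for k :: int
    using that no_root by (simp add: power_int_def)
  have "q powi (n - m) = 1" "q powi (m - n) = 1"
    using eq \<open>q \<noteq> 0\<close> by (simp_all add: power_int_diff)
  then show ?thesis using pos[of "n - m"] pos[of "m - n"] by linarith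
qed

locale q_geometric_td_pair =
  vector_space s for s :: "'k::field \<Rightarrow> 'v::ab_group_add \<Rightarrow> 'v" (infixr \<open>*s\<close> 75) +
  fixes A As Ks :: "'v \<Rightarrow> 'v" and Vs Vss :: "nat \<Rightarrow> 'v set" and d :: nat and a as q :: 'k
  assumes q_nonzero: "q \<noteq> 0" and q_not_root_of_unity: "\<forall>n>0. q ^ n \<noteq> 1"
    and td_pair: "TD_pair s A As"
    and Vs_standard: "standard_ordering s A As Vs d" and Vss_standard: "standard_ordering s As A Vss d"
    and a_nonzero: "a \<noteq> 0" and as_nonzero: "as \<noteq> 0"
    and Vs_eq: "\<forall>i\<le>d. Vs i = eigenspace s A (a * q powi (2 * int i - int d))"
    and Vss_eq: "\<forall>i\<le>d. Vss i = eigenspace s As (as * q powi (int d - 2 * int i))"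
    and linear_Ks: "Vector_Spaces.linear s s Ks"
    and Ks_eq: "\<forall>i\<le>d. \<forall>v\<in>dec_Ds0 s Vs Vss d i. Ks v = s (q powi (2 * int i - int d)) v"
begin

definition \<kappa> :: "nat \<Rightarrow> 'k" where "\<kappa> j = q powi (2 * int j - int d)"
definition \<kappa>' :: "nat \<Rightarrow> 'k" where "\<kappa>' j = q powi (int d - 2 * int j)"

lemma \<kappa>_nonzero [simp]: "\<kappa> j \<noteq> 0" and \<kappa>'_nonzero [simp]: "\<kappa>' j \<noteq> 0"
  using q_nonzero by (simp_all add: \<kappa>_def \<kappa>'_def)

lemma \<kappa>_mult_\<kappa>' [simp]: "\<kappa> j * \<kappa>' j = 1" and \<kappa>'_mult_\<kappa> [simp]: "\<kappa>' j * \<kappa> j = 1"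
  using q_nonzero by (simp_all add: \<kappa>_def \<kappa>'_def flip: power_int_add)

lemma \<kappa>'_eq_inverse: "\<kappa>' j = inverse (\<kappa> j)"
  using \<kappa>'_mult_\<kappa>[of j] by (metis mult.commute inverse_unique)

lemma q2_nonzero: "q\<^sup>2 \<noteq> 0"
  using q_nonzero by simp

lemma \<kappa>_Suc: "\<kappa> (Suc j) = q\<^sup>2 * \<kappa> j" and \<kappa>'_Suc: "q\<^sup>2 * \<kappa>' (Suc j) = \<kappa>' j"
proof -
  have step: "q powi (2 + k) = q\<^sup>2 * q powi k" for k :: int
    using q_nonzero by (simp add: power_int_add)
  have "2 * int (Suc j) - int d = 2 + (2 * int j - int d)" "int d - 2 * int j = 2 + (int d - 2 * int (Suc j))"
    by simp_all
  then show "\<kappa> (Suc j) = q\<^sup>2 * \<kappa> j" "q\<^sup>2 * \<kappa>' (Suc j) = \<kappa>' j"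
    by (simp_all only: \<kappa>_def \<kappa>'_def step)
qed

lemma \<kappa>_reverse: "j \<le> d \<Longrightarrow> \<kappa> (d - j) = \<kappa>' j" and \<kappa>'_reverse: "j \<le> d \<Longrightarrow> \<kappa>' (d - j) = \<kappa> j"
  by (simp_all add: \<kappa>_def \<kappa>'_def algebra_simps)

lemma inj_\<kappa>: "inj \<kappa>"
proof (rule injI)
  fix i j assume "\<kappa> i = \<kappa> j"
  then have "2 * int i - int d = 2 * int j - int d"
    by (intro power_int_inj[OF q_nonzero q_not_root_of_unity]) (simp add: \<kappa>_def)
  then show "i = j" by simp
qed

lemma inj_\<kappa>': "inj \<kappa>'"
proof (rule injI)
  fix i j assume "\<kappa>' i = \<kappa>' j"
  then have "int d - 2 * int i = int d - 2 * int j"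
    by (intro power_int_inj[OF q_nonzero q_not_root_of_unity]) (simp add: \<kappa>'_def)
  then show "i = j" by simp
qed

lemma linear_A: "Vector_Spaces.linear s s A" and linear_As: "Vector_Spaces.linear s s As"
  and irreducible: "\<And>W. subspace W \<Longrightarrow> A ` W \<subseteq> W \<Longrightarrow> As ` W \<subseteq> W \<Longrightarrow> W = {0} \<or> W = UNIV"
  using td_pair by (simp_all add: TD_pair_def)

lemma Vs_ordering: "eigen_ordering s A As Vs (\<lambda>j. a * \<kappa> j) d"
  using standard_ordering_imp_eigen_ordering[OF Vs_standard] td_pair Vs_eq
  by (simp add: TD_pair_def \<kappa>_def)

lemma Vss_ordering: "eigen_ordering s As A Vss (\<lambda>j. as * \<kappa>' j) d"
  using standard_ordering_imp_eigen_ordering[OF Vss_standard] td_pair Vss_eq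
  by (simp add: TD_pair_def \<kappa>'_def)

lemma tridiagonal_system_pad:
  "eigen_ordering s A As S \<theta> d \<Longrightarrow> eigen_ordering s As A T \<theta>' d \<Longrightarrow>
    tridiagonal_system s A As (pad d S) (pad d T) d \<theta> \<theta>'"
  by (intro tridiagonal_system.intro vector_space_axioms tridiagonal_system_axioms.intro)
    (simp_all add: linear_A linear_As irreducible eigen_ordering_pad)

sublocale split_0sD: tridiagonal_system s A As "pad d Vs" "pad d Vss" d
  "\<lambda>j. a * \<kappa> j" "\<lambda>j. as * \<kappa>' j"
  by (rule tridiagonal_system_pad[OF Vs_ordering Vss_ordering])

sublocale split_Ds0: tridiagonal_system s A As "pad d (\<lambda>j. Vs (d - j))" "pad d (\<lambda>j. Vss (d - j))" d
  "\<lambda>j. a * \<kappa> (d - j)" "\<lambda>j. as * \<kappa>' (d - j)"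
  by (rule tridiagonal_system_pad[OF eigen_ordering_reverse[OF Vs_ordering] eigen_ordering_reverse[OF Vss_ordering]])

sublocale split_0s0: tridiagonal_system s A As "pad d (\<lambda>j. Vs (d - j))" "pad d Vss" d
  "\<lambda>j. a * \<kappa> (d - j)" "\<lambda>j. as * \<kappa>' j"
  by (rule tridiagonal_system_pad[OF eigen_ordering_reverse[OF Vs_ordering] Vss_ordering])

sublocale split_DsD: tridiagonal_system s A As "pad d Vs" "pad d (\<lambda>j. Vss (d - j))" d
  "\<lambda>j. a * \<kappa> j" "\<lambda>j. as * \<kappa>' (d - j)"
  by (rule tridiagonal_system_pad[OF Vs_ordering eigen_ordering_reverse[OF Vss_ordering]])

abbreviation E :: "nat \<Rightarrow> 'v set" where "E \<equiv> split_Ds0.U"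

lemma dec_0sD_eq: "j \<le> d \<Longrightarrow> dec_0sD s Vs Vss d j = split_0sD.U j"
  by (simp add: dec_0sD_def split_0sD.U_eq ssum_pad atLeast0AtMost Int_absorb2 atLeastAtMost_def)

lemma dec_Ds0_eq: "j \<le> d \<Longrightarrow> dec_Ds0 s Vs Vss d j = E j"
proof -
  assume "j \<le> d"
  then have "{m. m \<le> d \<and> d - m \<in> {..j}} = {d - j..d}" "{m. m \<le> d \<and> d - m \<in> {j..}} = {0..d - j}"
    by auto
  then show ?thesis by (simp add: dec_Ds0_def split_Ds0.U_eq ssum_pad_reverse)
qed

lemma dec_0s0_eq: "j \<le> d \<Longrightarrow> dec_0s0 s Vs Vss d j = split_0s0.U j"
proof -
  assume "j \<le> d"
  then have "{..j} \<inter> {..d} = {0..j}" "{m. m \<le> d \<and> d - m \<in> {j..}} = {0..d - j}"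
    by auto
  then show ?thesis
    unfolding dec_0s0_def split_0s0.U_eq ssum_pad_reverse unfolding ssum_pad by simp
qed

lemma dec_DsD_eq: "j \<le> d \<Longrightarrow> dec_DsD s Vs Vss d j = split_DsD.U j"
proof -
  assume "j \<le> d"
  then have "{m. m \<le> d \<and> d - m \<in> {..j}} = {d - j..d}" "{j..} \<inter> {..d} = {j..d}"
    by auto
  then show ?thesis
    unfolding dec_DsD_def split_DsD.U_eq ssum_pad_reverse unfolding ssum_pad by simp
qed

lemma Ks_E: "v \<in> E j \<Longrightarrow> Ks v = \<kappa> j *s v"
  using Ks_eq dec_Ds0_eq split_Ds0.U_gr endo.linear_0[OF linear_Ks]
  by (cases "j \<le> d") (auto simp: \<kappa>_def)

lemma ssum_E_atMost: "ssum s E {..d} = UNIV"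
  using split_Ds0.ssum_U_UNIV ssum_mono_neutral_right[of "{..d}" UNIV E] split_Ds0.U_gr
  by auto

lemma bij_Ks: "bij Ks"
  by (rule diagonal_bij[OF linear_Ks Ks_E split_Ds0.subspace_U \<kappa>_nonzero ssum_E_atMost])

lemma linear_inv_Ks: "Vector_Spaces.linear s s (inv Ks)"
  using bij_Ks linear_Ks by (simp add: linear_iff_module_hom bij_module_hom_imp_inv_module_hom)

lemma inv_Ks_Ks [simp]: "inv Ks (Ks v) = v"
  using bij_Ks by (simp add: bij_is_inj)

lemma inv_Ks_E: "v \<in> E j \<Longrightarrow> inv Ks v = \<kappa>' j *s v"
  using Ks_E[OF subspace_scale[OF split_Ds0.subspace_U, of v j "\<kappa>' j"]]
  by (metis \<kappa>_mult_\<kappa>' inv_Ks_Ks scale_one scale_scale)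

lemma Ks_minus_image: "shift_img s Ks (\<kappa> m) (ssum s E J) \<subseteq> ssum s E (J - {m})"
  unfolding shift_img_def by (rule diagonal_minus_scale_image[OF linear_Ks Ks_E])

lemma inv_Ks_minus_image:
  "shift_img s (inv Ks) (\<kappa>' m) (ssum s E J) \<subseteq> ssum s E (J - {m})"
  unfolding shift_img_def by (rule diagonal_minus_scale_image[OF linear_inv_Ks inv_Ks_E])

lemma ssum_E_atLeast: "ssum s E {i..} = ssum s (pad d Vs) {..<Suc d - i}"
proof -
  have "{m. m \<le> d \<and> d - m \<in> {i..}} = {..<Suc d - i} \<inter> {..d}" by auto
  then show ?thesis by (simp add: split_Ds0.ssum_U_atLeast ssum_pad_reverse ssum_pad)
qed

lemma ssum_E_lessThan: "ssum s E {..<i} = ssum s (pad d Vss) {Suc d - i..}"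
proof -
  have "{m. m \<le> d \<and> d - m \<in> {..<i}} = {Suc d - i..} \<inter> {..d}" by auto
  then show ?thesis by (simp add: split_Ds0.ssum_U_lessThan ssum_pad_reverse ssum_pad)
qed

lemma Ks_A_commutation: "Ks (A v) - q\<^sup>2 *s A (Ks v) = ((1 - q\<^sup>2) * a) *s v"
proof (rule commutation_from_eigenspaces[OF linear_Ks linear_A ssum_E_atMost Ks_E])
  fix j x assume j: "j \<in> {..d}" and x: "x \<in> E j"
  have "a / \<kappa> j = a * \<kappa> (d - j)"
    using j by (simp add: \<kappa>_reverse \<kappa>'_eq_inverse divide_inverse)
  then have "A x - (a / \<kappa> j) *s x \<in> E (Suc j)"
    using split_Ds0.U_raise[OF x] by simp
  then show "Ks (A x - (a / \<kappa> j) *s x) = (q\<^sup>2 * \<kappa> j) *s (A x - (a / \<kappa> j) *s x)"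
    by (simp add: Ks_E \<kappa>_Suc)
qed simp_all

lemma inv_Ks_As_commutation: "inv Ks (As v) - q\<^sup>2 *s As (inv Ks v) = ((1 - q\<^sup>2) * as) *s v"
proof (rule commutation_from_eigenspaces[OF linear_inv_Ks linear_As ssum_E_atMost inv_Ks_E])
  fix j x assume j: "j \<in> {..d}" and x: "x \<in> E j"
  have "as / \<kappa>' j = as * \<kappa>' (d - j)"
    using j by (simp add: \<kappa>'_reverse divide_eq_eq mult.assoc)
  then show "inv Ks (As x - (as / \<kappa>' j) *s x) = (q\<^sup>2 * \<kappa>' j) *s (As x - (as / \<kappa>' j) *s x)"
    using split_Ds0.U_lower_0 split_Ds0.U_lower x endo.linear_0[OF linear_inv_Ks]
    by (cases j) (auto simp: inv_Ks_E \<kappa>'_Suc)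
qed simp_all


lemma A_eigenvector: "A w = (a * \<kappa> j) *s w \<Longrightarrow> w \<in> pad d Vs j"
proof (cases "j \<le> d")
  case False
  assume "A w = (a * \<kappa> j) *s w"
  moreover have "a * \<kappa> j \<notin> (\<lambda>j. a * \<kappa> j) ` {..d}"
    using False a_nonzero inj_\<kappa> by (auto dest: injD)
  ultimately show ?thesis
    using eigen_ordering_eigenvector_eq_0[OF Vs_ordering linear_A] False by simp
qed (use eigen_orderingD(3)[OF Vs_ordering] in \<open>simp add: eigenspace_def\<close>)

lemma As_eigenvector: "As w = (as * \<kappa>' j) *s w \<Longrightarrow> w \<in> pad d Vss j"
proof (cases "j \<le> d")
  case False
  assume "As w = (as * \<kappa>' j) *s w"
  moreover have "as * \<kappa>' j \<notin> (\<lambda>j. as * \<kappa>' j) ` {..d}"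
    using False as_nonzero inj_\<kappa>' by (auto dest: injD)
  ultimately show ?thesis
    using eigen_ordering_eigenvector_eq_0[OF Vss_ordering linear_As] False by simp
qed (use eigen_orderingD(3)[OF Vss_ordering] in \<open>simp add: eigenspace_def\<close>)

lemma Ks_Vs: "shift_img s Ks (\<kappa>' i) (pad d Vs i) \<subseteq> (if i = 0 then {0} else pad d Vs (i - 1))"
  unfolding shift_img_def
proof (rule image_subsetI)
  fix v assume "v \<in> pad d Vs i"
  then have "A v = (a * \<kappa> i) *s v" by (rule split_0sD.X_eigen)
  from commutation_eigenvector_shift[OF linear_Ks linear_A q2_nonzero Ks_A_commutation this, where \<rho> = "\<kappa>' i"]
  have Aw: "A (Ks v - \<kappa>' i *s v) = (a * \<kappa> i / q\<^sup>2) *s (Ks v - \<kappa>' i *s v)"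
    by simp
  show "Ks v - \<kappa>' i *s v \<in> (if i = 0 then {0} else pad d Vs (i - 1))"
  proof (cases i)
    case 0
    have "\<kappa> 0 \<noteq> q\<^sup>2 * \<kappa> j" for j
      using injD[OF inj_\<kappa>, of "Suc j" 0] by (auto simp: \<kappa>_Suc)
    then have "a * \<kappa> i / q\<^sup>2 \<notin> (\<lambda>j. a * \<kappa> j) ` {..d}"
      using 0 a_nonzero q_nonzero by (auto simp: field_simps)
    then show ?thesis
      using 0 eigen_ordering_eigenvector_eq_0[OF Vs_ordering linear_A Aw] by simp
  next
    case (Suc m)
    then show ?thesis using A_eigenvector[of _ m] Aw q_nonzero by (simp add: \<kappa>_Suc)
  qed
qed

lemma inv_Ks_Vss: "shift_img s (inv Ks) (\<kappa> i) (pad d Vss i) \<subseteq> pad d Vss (Suc i)"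
  unfolding shift_img_def
proof (rule image_subsetI)
  fix v assume "v \<in> pad d Vss i"
  then have "As v = (as * \<kappa>' i) *s v" by (rule split_0sD.Y_eigen)
  from commutation_eigenvector_shift[OF linear_inv_Ks linear_As q2_nonzero inv_Ks_As_commutation this,
      where \<rho> = "\<kappa> i"]
  have "As (inv Ks v - \<kappa> i *s v) = (as * \<kappa>' i / q\<^sup>2) *s (inv Ks v - \<kappa> i *s v)"
    by simp
  also have "as * \<kappa>' i / q\<^sup>2 = as * \<kappa>' (Suc i)"
    using q_nonzero by (simp add: \<kappa>'_Suc[of i, symmetric])
  finally show "inv Ks v - \<kappa> i *s v \<in> pad d Vss (Suc i)"
    by (rule As_eigenvector)
qed

lemma inv_Ks_Vs:
  assumes "i \<le> d"
  shows "shift_img s (inv Ks) (\<kappa> i) (pad d Vs i) \<subseteq> ssum s (pad d Vs) {..<i}"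
proof -
  have "pad d Vs i \<subseteq> ssum s (pad d Vs) {..<Suc i}"
    by (auto intro: ssum_base)
  also have "\<dots> = ssum s E {d - i..}"
    using assms by (simp add: ssum_E_atLeast)
  finally have "pad d Vs i \<subseteq> ssum s E {d - i..}" .
  then have "shift_img s (inv Ks) (\<kappa> i) (pad d Vs i)
      \<subseteq> shift_img s (inv Ks) (\<kappa>' (d - i)) (ssum s E {d - i..})"
    using assms by (simp add: \<kappa>'_reverse shift_img_mono)
  also have "\<dots> \<subseteq> ssum s E ({d - i..} - {d - i})"
    by (rule inv_Ks_minus_image)
  also have "{d - i..} - {d - i} = {Suc (d - i)..}"
    by auto
  also have "ssum s E {Suc (d - i)..} = ssum s (pad d Vs) {..<i}"
    using assms by (simp add: ssum_E_atLeast)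
  finally show ?thesis .
qed

lemma Ks_Vss:
  assumes "i \<le> d"
  shows "shift_img s Ks (\<kappa>' i) (pad d Vss i) \<subseteq> ssum s (pad d Vss) {Suc i..d}"
proof -
  have "pad d Vss i \<subseteq> ssum s (pad d Vss) {i..}"
    by (auto intro: ssum_base)
  also have "\<dots> = ssum s E {..<Suc (d - i)}"
    using assms by (simp add: ssum_E_lessThan)
  finally have "pad d Vss i \<subseteq> ssum s E {..<Suc (d - i)}" .
  then have "shift_img s Ks (\<kappa>' i) (pad d Vss i)
      \<subseteq> shift_img s Ks (\<kappa> (d - i)) (ssum s E {..<Suc (d - i)})"
    using assms by (simp add: \<kappa>_reverse shift_img_mono)
  also have "\<dots> \<subseteq> ssum s E ({..<Suc (d - i)} - {d - i})"
    by (rule Ks_minus_image)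
  also have "{..<Suc (d - i)} - {d - i} = {..<d - i}"
    by auto
  also have "ssum s E {..<d - i} = ssum s (pad d Vss) {Suc i..d}"
    using assms by (simp add: ssum_E_lessThan ssum_pad Int_absorb2 atLeastAtMost_def)
  finally show ?thesis .
qed


lemma Ks_flag: "Ks ` ssum s (pad d Vs) {i..} \<subseteq> ssum s (pad d Vs) {i - 1..}"
proof (rule linear_image_ssum_subset[OF linear_Ks])
  fix j x assume j: "j \<in> {i..}" and x: "x \<in> pad d Vs j"
  have "Ks x - \<kappa>' j *s x \<in> (if j = 0 then {0} else pad d Vs (j - 1))"
    using Ks_Vs[of j] x by (auto simp: shift_img_def)
  then have "Ks x - \<kappa>' j *s x \<in> ssum s (pad d Vs) {i - 1..}"
  proof (cases j)
    case (Suc m)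
    then show ?thesis using j \<open>Ks x - \<kappa>' j *s x \<in> _\<close> by (intro ssum_base[of m]) auto
  qed (simp add: subspace_0)
  moreover have "\<kappa>' j *s x \<in> ssum s (pad d Vs) {i - 1..}"
    using j x by (intro subspace_scale[OF subspace_ssum] ssum_base[of j]) auto
  ultimately show "Ks x \<in> ssum s (pad d Vs) {i - 1..}"
    by (metis diff_add_cancel subspace_add subspace_ssum)
qed simp

lemma inv_Ks_flag: "inv Ks ` ssum s (pad d Vss) {..i} \<subseteq> ssum s (pad d Vss) {..Suc i}"
proof (rule linear_image_ssum_subset[OF linear_inv_Ks])
  fix j x assume j: "j \<in> {..i}" and x: "x \<in> pad d Vss j"
  have "inv Ks x - \<kappa> j *s x \<in> ssum s (pad d Vss) {..Suc i}"
    using inv_Ks_Vss[of j] x j by (auto simp: shift_img_def intro: ssum_base)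
  moreover have "\<kappa> j *s x \<in> ssum s (pad d Vss) {..Suc i}"
    using j x by (intro subspace_scale[OF subspace_ssum] ssum_base[of j]) auto
  ultimately show "inv Ks x \<in> ssum s (pad d Vss) {..Suc i}"
    by (metis diff_add_cancel subspace_add subspace_ssum)
qed simp

lemma split_0sD_Ks: "Ks ` split_0sD.U i \<subseteq> ssum s split_0sD.U {i - 1..d}"
proof -
  have "Ks ` split_0sD.U i \<subseteq> Ks ` ssum s (pad d Vs) {i..}"
    by (simp add: split_0sD.U_eq image_mono)
  also have "\<dots> \<subseteq> ssum s (pad d Vs) {i - 1..}"
    by (rule Ks_flag)
  also have "\<dots> = ssum s split_0sD.U {i - 1..d}"
    by (simp add: split_0sD.ssum_U_atLeast split_0sD.ssum_U_atLeastAtMost)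
  finally show ?thesis .
qed

lemma split_0sD_inv_Ks: "inv Ks ` split_0sD.U i \<subseteq> ssum s split_0sD.U {..Suc i}"
proof -
  have "inv Ks ` split_0sD.U i \<subseteq> inv Ks ` ssum s (pad d Vss) {..i}"
    by (simp add: split_0sD.U_eq image_mono)
  also have "\<dots> \<subseteq> ssum s (pad d Vss) {..Suc i}"
    by (rule inv_Ks_flag)
  finally show ?thesis by (simp add: split_0sD.ssum_U_atMost)
qed

lemma split_0s0_Ks: "shift_img s Ks (\<kappa> i) (split_0s0.U i) \<subseteq> ssum s split_0s0.U {Suc i..d}"
proof -
  have "split_0s0.U i \<subseteq> ssum s E {i..}"
    by (auto simp: split_0s0.U_eq split_Ds0.ssum_U_atLeast)
  then have "shift_img s Ks (\<kappa> i) (split_0s0.U i) \<subseteq> ssum s E ({i..} - {i})"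
    using Ks_minus_image shift_img_mono by blast
  also have "{i..} - {i} = {Suc i..}"
    by auto
  also have "ssum s E {Suc i..} = ssum s split_0s0.U {Suc i..d}"
    by (simp add: split_Ds0.ssum_U_atLeast split_0s0.ssum_U_atLeast split_0s0.ssum_U_atLeastAtMost)
  finally show ?thesis .
qed

lemma split_0s0_inv_Ks: "shift_img s (inv Ks) (\<kappa>' i) (split_0s0.U i) \<subseteq> split_0s0.U (Suc i)"
  unfolding shift_img_def
proof (rule image_subsetI)
  fix v assume v: "v \<in> split_0s0.U i"
  have "v \<in> ssum s E {i..}"
    using v by (simp add: split_0s0.U_eq split_Ds0.ssum_U_atLeast)
  then have "inv Ks v - \<kappa>' i *s v \<in> ssum s E ({i..} - {i})"
    using inv_Ks_minus_image by (auto simp: shift_img_def)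
  moreover have "{i..} - {i} = {Suc i..}"
    by auto
  ultimately have X: "inv Ks v - \<kappa>' i *s v \<in> ssum s (pad d (\<lambda>j. Vs (d - j))) {Suc i..}"
    by (simp add: split_Ds0.ssum_U_atLeast)
  have "v \<in> ssum s (pad d Vss) {..i}"
    using v by (simp add: split_0s0.U_eq)
  then have "inv Ks v \<in> ssum s (pad d Vss) {..Suc i}" and "v \<in> ssum s (pad d Vss) {..Suc i}"
    using inv_Ks_flag ssum_mono[of "{..i}" "{..Suc i}"] by auto
  then have "inv Ks v - \<kappa>' i *s v \<in> ssum s (pad d Vss) {..Suc i}"
    by (simp add: subspace_diff subspace_scale)
  with X show "inv Ks v - \<kappa>' i *s v \<in> split_0s0.U (Suc i)"
    by (simp add: split_0s0.U_eq)
qed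

lemma split_Ds0_Ks: "shift_img s Ks (\<kappa> i) (E i) = {0}"
  and split_Ds0_inv_Ks: "shift_img s (inv Ks) (\<kappa>' i) (E i) = {0}"
  using subspace_0[OF split_Ds0.subspace_U] by (auto simp: shift_img_def Ks_E inv_Ks_E)

lemma split_DsD_Ks: "shift_img s Ks (\<kappa> i) (split_DsD.U i) \<subseteq> (if i = 0 then {0} else split_DsD.U (i - 1))"
  unfolding shift_img_def
proof (rule image_subsetI)
  fix v assume v: "v \<in> split_DsD.U i"
  have "v \<in> ssum s E {..i}"
    using v by (simp add: split_DsD.U_eq split_Ds0.ssum_U_atMost)
  then have "Ks v - \<kappa> i *s v \<in> ssum s E ({..i} - {i})"
    using Ks_minus_image by (auto simp: shift_img_def)
  moreover have "{..i} - {i} = {..<i}"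
    by auto
  ultimately have Y: "Ks v - \<kappa> i *s v \<in> ssum s (pad d (\<lambda>j. Vss (d - j))) {..<i}"
    by (simp add: split_Ds0.ssum_U_lessThan)
  have "v \<in> ssum s (pad d Vs) {i..}"
    using v by (simp add: split_DsD.U_eq)
  then have "Ks v \<in> ssum s (pad d Vs) {i - 1..}" and "v \<in> ssum s (pad d Vs) {i - 1..}"
    using Ks_flag ssum_mono[of "{i..}" "{i - 1..}"] by auto
  then have X: "Ks v - \<kappa> i *s v \<in> ssum s (pad d Vs) {i - 1..}"
    by (simp add: subspace_diff subspace_scale)
  show "Ks v - \<kappa> i *s v \<in> (if i = 0 then {0} else split_DsD.U (i - 1))"
  proof (cases i)
    case (Suc m)
    then show ?thesis using X Y by (simp add: split_DsD.U_eq lessThan_Suc_atMost)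
  qed (use Y in simp)
qed

lemma split_DsD_inv_Ks: "shift_img s (inv Ks) (\<kappa>' i) (split_DsD.U i) \<subseteq> ssum s split_DsD.U {..<i}"
proof -
  have "split_DsD.U i \<subseteq> ssum s E {..i}"
    by (auto simp: split_DsD.U_eq split_Ds0.ssum_U_atMost)
  then have "shift_img s (inv Ks) (\<kappa>' i) (split_DsD.U i) \<subseteq> ssum s E ({..i} - {i})"
    using inv_Ks_minus_image shift_img_mono by blast
  also have "{..i} - {i} = {..<i}"
    by auto
  finally show ?thesis
    by (simp add: split_Ds0.ssum_U_lessThan split_DsD.ssum_U_lessThan)
qed

lemma decomposition_0D:
  assumes "i \<le> d"
  shows "let U = ext_idx (dec_0D Vs Vss d) d in
       shift_img s Ks (q powi (int d - 2 * int i)) (U (int i)) \<subseteq> U (int i - 1) \<and>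
       shift_img s (inv Ks) (q powi (2 * int i - int d)) (U (int i)) \<subseteq> ssum s U {0..int i - 1}"
proof -
  have "dec_0D Vs Vss d n = pad d Vs n" if "n \<le> d" for n
    using that by (simp add: dec_0D_def)
  from ext_idx_simps[OF this pad_gr] show ?thesis
    using Ks_Vs inv_Ks_Vs[OF assms] by (simp add: Let_def \<kappa>_def \<kappa>'_def)
qed

lemma decomposition_0sDs:
  assumes "i \<le> d"
  shows "let U = ext_idx (dec_0sDs Vs Vss d) d in
       shift_img s Ks (q powi (int d - 2 * int i)) (U (int i)) \<subseteq> ssum s U {int i + 1..int d} \<and>
       shift_img s (inv Ks) (q powi (2 * int i - int d)) (U (int i)) \<subseteq> U (int i + 1)"
proof -
  have "dec_0sDs Vs Vss d n = pad d Vss n" if "n \<le> d" for n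
    using that by (simp add: dec_0sDs_def)
  from ext_idx_simps[OF this pad_gr] show ?thesis
    using Ks_Vss[OF assms] inv_Ks_Vss by (simp add: Let_def \<kappa>_def \<kappa>'_def)
qed

lemma decomposition_0sD:
  "let U = ext_idx (dec_0sD s Vs Vss d) d in
       Ks ` U (int i) \<subseteq> ssum s U {int i - 1..int d} \<and>
       inv Ks ` U (int i) \<subseteq> ssum s U {0..int i + 1}"
  using ext_idx_simps[OF dec_0sD_eq split_0sD.U_gr] split_0sD_Ks split_0sD_inv_Ks
  by (simp add: Let_def \<kappa>_def \<kappa>'_def)

lemma decomposition_0s0:
  "let U = ext_idx (dec_0s0 s Vs Vss d) d in
       shift_img s Ks (q powi (2 * int i - int d)) (U (int i)) \<subseteq> ssum s U {int i + 1..int d} \<and>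
       shift_img s (inv Ks) (q powi (int d - 2 * int i)) (U (int i)) \<subseteq> U (int i + 1)"
  using ext_idx_simps[OF dec_0s0_eq split_0s0.U_gr] split_0s0_Ks split_0s0_inv_Ks
  by (simp add: Let_def \<kappa>_def \<kappa>'_def)

lemma decomposition_Ds0:
  "let U = ext_idx (dec_Ds0 s Vs Vss d) d in
       shift_img s Ks (q powi (2 * int i - int d)) (U (int i)) = {0} \<and>
       shift_img s (inv Ks) (q powi (int d - 2 * int i)) (U (int i)) = {0}"
  using ext_idx_simps[OF dec_Ds0_eq split_Ds0.U_gr] split_Ds0_Ks split_Ds0_inv_Ks
  by (simp add: Let_def \<kappa>_def \<kappa>'_def)

lemma decomposition_DsD:
  "let U = ext_idx (dec_DsD s Vs Vss d) d in
       shift_img s Ks (q powi (2 * int i - int d)) (U (int i)) \<subseteq> U (int i - 1) \<and>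
       shift_img s (inv Ks) (q powi (int d - 2 * int i)) (U (int i)) \<subseteq> ssum s U {0..int i - 1}"
  using ext_idx_simps[OF dec_DsD_eq split_DsD.U_gr] split_DsD_Ks split_DsD_inv_Ks
  by (simp add: Let_def \<kappa>_def \<kappa>'_def)

end

theorem theorem11p2:
  fixes s :: "'k::field \<Rightarrow> 'v::ab_group_add \<Rightarrow> 'v"
    and A As Ks :: "'v \<Rightarrow> 'v"
    and Vs Vss :: "nat \<Rightarrow> 'v set"
    and d :: nat and a as q :: 'k
  assumes "alg_closed_field TYPE('k)"
    and "q \<noteq> 0" and "\<forall>n>0. q ^ n \<noteq> 1"
    and "vector_space s" and "fin_dim s" and "\<exists>v::'v. v \<noteq> 0"
    and "TD_pair s A As"
    and "standard_ordering s A As Vs d"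
    and "standard_ordering s As A Vss d"
    and "a \<noteq> 0" and "as \<noteq> 0"
    and "\<forall>i\<le>d. Vs i = eigenspace s A (a * q powi (2 * int i - int d))"
    and "\<forall>i\<le>d. Vss i = eigenspace s As (as * q powi (int d - 2 * int i))"
    and "Vector_Spaces.linear s s Ks"
    and "\<forall>i\<le>d. \<forall>v\<in>dec_Ds0 s Vs Vss d i. Ks v = s (q powi (2 * int i - int d)) v"
  shows "\<forall>i\<le>d.
    (let U = ext_idx (dec_0D Vs Vss d) d in
       shift_img s Ks (q powi (int d - 2 * int i)) (U (int i)) \<subseteq> U (int i - 1) \<and>
       shift_img s (inv Ks) (q powi (2 * int i - int d)) (U (int i)) \<subseteq> ssum s U {0..int i - 1}) \<and>
    (let U = ext_idx (dec_0sDs Vs Vss d) d in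
       shift_img s Ks (q powi (int d - 2 * int i)) (U (int i)) \<subseteq> ssum s U {int i + 1..int d} \<and>
       shift_img s (inv Ks) (q powi (2 * int i - int d)) (U (int i)) \<subseteq> U (int i + 1)) \<and>
    (let U = ext_idx (dec_0sD s Vs Vss d) d in
       Ks ` U (int i) \<subseteq> ssum s U {int i - 1..int d} \<and>
       inv Ks ` U (int i) \<subseteq> ssum s U {0..int i + 1}) \<and>
    (let U = ext_idx (dec_0s0 s Vs Vss d) d in
       shift_img s Ks (q powi (2 * int i - int d)) (U (int i)) \<subseteq> ssum s U {int i + 1..int d} \<and>
       shift_img s (inv Ks) (q powi (int d - 2 * int i)) (U (int i)) \<subseteq> U (int i + 1)) \<and>
    (let U = ext_idx (dec_Ds0 s Vs Vss d) d in
       shift_img s Ks (q powi (2 * int i - int d)) (U (int i)) = {0} \<and>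
       shift_img s (inv Ks) (q powi (int d - 2 * int i)) (U (int i)) = {0}) \<and>
    (let U = ext_idx (dec_DsD s Vs Vss d) d in
       shift_img s Ks (q powi (2 * int i - int d)) (U (int i)) \<subseteq> U (int i - 1) \<and>
       shift_img s (inv Ks) (q powi (int d - 2 * int i)) (U (int i)) \<subseteq> ssum s U {0..int i - 1})"
proof -
  interpret q_geometric_td_pair s A As Ks Vs Vss d a as q
    using assms by (simp add: q_geometric_td_pair_def q_geometric_td_pair_axioms_def)
  show ?thesis
    using decomposition_0D decomposition_0sDs decomposition_0sD decomposition_0s0
      decomposition_Ds0 decomposition_DsD
    by blast
qed

end
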